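(* Let $\alpha>0$ and let $\nu_1\in\mathcal M^+_\alpha(\mathbb R)$ with $\operatorname{supp}\nu_1\subset(-\infty,0]$. Then for every $\beta>0$, $$C_\alpha[\nu_1](z)=e^{i\pi\beta}\,C_{\alpha+\beta}[\nu_2](z),\qquad z\in\mathbb C^+,$$ where $\nu_2\in\mathcal M^+_{\alpha+\beta}(\mathbb R)$ is the locally absolutely continuous measure $$\nu_2(d\tau)=\frac1{B(\alpha,\beta)}\Big(\int_{(\tau,0]}(t-\tau)^{\beta-1}\nu_1(dt)\Big)d\tau.$$
   Context: $\mathbb C^+=\{z:\operatorname{Im}z>0\}$. For $\alpha\ge0$, $\mathcal M^+_\alpha(\mathbb R)$ is the set of positive Borel (Radon) measures $\mu$ on $\mathbb R$ with $\int_{\mathbb R}(1+|t|)^{-\alpha}\mu(dt)<\infty$. For $\alpha>0$, $C_\alpha[\mu](z)=\int_{\mathbb R}\frac{\mu(dt)}{(z+t)^\alpha}$, $z\in\mathbb C^+$, with the principal branch of the power. $B$ is the beta function. *)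

theory Defs
  imports "HOL-Analysis.Analysis"
begin

definition Mplus :: "real \<Rightarrow> real measure \<Rightarrow> bool" where
  "Mplus \<alpha> \<mu> \<longleftrightarrow> sets \<mu> = sets borel \<and>
     (\<integral>\<^sup>+ t. ennreal ((1 + \<bar>t\<bar>) powr (-\<alpha>)) \<partial>\<mu>) < \<infinity>"

text \<open>Generalized Cauchy transform C_alpha[mu](z) = int mu(dt) / (z+t)^alpha,
  principal branch (complex powr uses the principal logarithm Ln).\<close>
definition Ctrans :: "real \<Rightarrow> real measure \<Rightarrow> complex \<Rightarrow> complex" where
  "Ctrans \<alpha> \<mu> z = (\<integral> t. 1 / ((z + complex_of_real t) powr complex_of_real \<alpha>) \<partial>\<mu>)"

definition nu2 :: "real \<Rightarrow> real \<Rightarrow> real measure \<Rightarrow> real measure" where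
  "nu2 \<alpha> \<beta> \<nu> = density lborel (\<lambda>\<tau>. ennreal (1 / Beta \<alpha> \<beta>) *
      (\<integral>\<^sup>+ t. indicator {\<tau><..0} t * ennreal ((t - \<tau>) powr (\<beta> - 1)) \<partial>\<nu>))"

end

theory Submission
  imports Defs "HOL-Complex_Analysis.Cauchy_Integral_Theorem"
begin

(* For t <= 0 and Im z > 0 the kernel identity
     int_{tau < t} (t - tau)^(beta-1) (z + tau)^(-(alpha+beta)) dtau = e^(-i pi beta) B(alpha,beta) (z + t)^(-alpha)
   holds: substituting tau = t - s and reflecting z + tau to -(z + tau) turns the left side into
   e^(-i pi (alpha+beta)) int_0^oo s^(beta-1) (s + u)^(-(alpha+beta)) ds with u = -(z + t) off the
   negative axis, and this complex Beta integral equals B(alpha,beta) u^(-alpha).  Integrating the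
   identity against nu_1 and exchanging the order of integration gives the theorem; Tonelli for the same
   kernel against (1 + |tau|)^(-(alpha+beta)) shows that nu_2 lies in M^+_(alpha+beta) and justifies
   the exchange. *)

section \<open>Real Beta integrals\<close>

lemma nn_integral_powr_exp_scaled:
  fixes c l :: real assumes c: "c > 0" and l: "l > 0"
  shows "(\<integral>\<^sup>+x. ennreal (indicator {0<..} x * x powr (c - 1) * exp (-(l * x))) \<partial>lborel)
         = ennreal (Gamma c * l powr (-c))"
proof -
  let ?I = "\<integral>\<^sup>+x. ennreal (indicator {0<..} x * x powr (c - 1) * exp (-(l * x))) \<partial>lborel"
  have "ennreal (Gamma c) = (\<integral>\<^sup>+ t. ennreal (indicator {0..} t * t powr (c - 1) / exp t) \<partial>lborel)"
    using Gamma_conv_nn_integral_real[OF c] by simp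
  also have "\<dots> = ennreal \<bar>l\<bar>
      * (\<integral>\<^sup>+ x. ennreal (indicator {0..} (0 + l * x) * (0 + l * x) powr (c - 1) / exp (0 + l * x)) \<partial>lborel)"
    by (rule nn_integral_real_affine) (use l in auto)
  also have "\<dots> = ennreal l * (\<integral>\<^sup>+ x. ennreal (l powr (c - 1))
      * ennreal (indicator {0<..} x * x powr (c - 1) * exp (-(l * x))) \<partial>lborel)"
    using l by (intro arg_cong2[where f="(*)"] nn_integral_cong)
       (auto simp: indicator_def powr_mult exp_minus field_simps ennreal_mult'[symmetric] zero_le_mult_iff)
  also have "\<dots> = ennreal (l * l powr (c - 1)) * ?I"
    by (subst nn_integral_cmult) (use l in \<open>auto simp: ennreal_mult' mult.assoc\<close>)
  also have "l * l powr (c - 1) = l powr c"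
    using l by (simp add: powr_diff)
  finally have *: "ennreal (Gamma c) = ennreal (l powr c) * ?I" .
  have "ennreal (Gamma c * l powr (-c)) = ennreal (l powr (-c)) * ennreal (Gamma c)"
    using l Gamma_real_pos[OF c] by (simp add: ennreal_mult' mult.commute)
  also have "\<dots> = ennreal (l powr (-c) * l powr c) * ?I"
    by (subst *) (simp add: ennreal_mult' mult.assoc)
  also have "l powr (-c) * l powr c = 1"
    using l by (simp add: powr_minus)
  finally show ?thesis by simp
qed

(* Gamma(a+b) (A+s)^(-(a+b)) is the integral of x^(a+b-1) exp(-(A+s)x) over x > 0;
   integrating in s first leaves Gamma(b) times a Gamma integral in x. *)
lemma nn_integral_beta_shifted_mult_Gamma:
  fixes a b A :: real assumes a: "a > 0" and b: "b > 0" and A: "A > 0"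
  shows "(\<integral>\<^sup>+s. ennreal (indicator {0<..} s * s powr (b - 1) * (A + s) powr (-(a+b))) \<partial>lborel)
      * ennreal (Gamma (a + b)) = ennreal (Gamma a * Gamma b * A powr (-a))"
proof -
  define G where "G = Gamma (a + b)"
  define P where "P c s = indicator {0<..} s * s powr (c - 1)" for c s :: real
  have G: "G > 0" unfolding G_def using a b by (intro Gamma_real_pos) auto
  have "(\<integral>\<^sup>+s. ennreal (indicator {0<..} s * s powr (b - 1) * (A + s) powr (-(a+b))) \<partial>lborel) * ennreal G
      = (\<integral>\<^sup>+s. ennreal (P b s) * ennreal (G * (A + s) powr (-(a+b))) \<partial>lborel)"
    by (subst nn_integral_multc[symmetric])
      (use G in \<open>auto intro!: nn_integral_cong simp: P_def ennreal_mult'[symmetric] indicator_def mult_ac\<close>)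
  also have "\<dots> = (\<integral>\<^sup>+s. \<integral>\<^sup>+x. ennreal (P b s) * ennreal (P (a + b) x * exp (-((A + s) * x))) \<partial>lborel \<partial>lborel)"
  proof (intro nn_integral_cong)
    fix s :: real
    show "ennreal (P b s) * ennreal (G * (A + s) powr (-(a+b)))
      = (\<integral>\<^sup>+x. ennreal (P b s) * ennreal (P (a + b) x * exp (-((A + s) * x))) \<partial>lborel)"
    proof (cases "s > 0")
      case True
      show ?thesis unfolding P_def
        by (subst nn_integral_cmult) (use True A a b in \<open>simp_all add: nn_integral_powr_exp_scaled G_def\<close>)
    qed (simp add: P_def indicator_def)
  qed
  also have "\<dots> = (\<integral>\<^sup>+x. \<integral>\<^sup>+s. ennreal (P b s) * ennreal (P (a + b) x * exp (-((A + s) * x))) \<partial>lborel \<partial>lborel)"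
    unfolding P_def by (rule lborel_pair.Fubini') measurable
  also have "\<dots> = (\<integral>\<^sup>+x. ennreal (P (a + b) x * exp (-(A * x)))
      * (\<integral>\<^sup>+s. ennreal (P b s * exp (-(x * s))) \<partial>lborel) \<partial>lborel)"
    by (subst nn_integral_cmult[symmetric])
       (auto intro!: nn_integral_cong simp: P_def ennreal_mult'[symmetric] indicator_def exp_add[symmetric] algebra_simps)
  also have "\<dots> = (\<integral>\<^sup>+x. ennreal (Gamma b) * ennreal (P a x * exp (-(A * x))) \<partial>lborel)"
  proof (intro nn_integral_cong)
    fix x :: real
    show "ennreal (P (a + b) x * exp (-(A * x))) * (\<integral>\<^sup>+s. ennreal (P b s * exp (-(x * s))) \<partial>lborel)
       = ennreal (Gamma b) * ennreal (P a x * exp (-(A * x)))"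
    proof (cases "x > 0")
      case True
      have e: "x powr (a + b - 1) * (x powr (-b)) = x powr (a - 1)"
        using True by (simp add: powr_add[symmetric])
      have "(\<integral>\<^sup>+s. ennreal (P b s * exp (-(x * s))) \<partial>lborel) = ennreal (Gamma b * x powr (-b))"
        unfolding P_def using nn_integral_powr_exp_scaled[OF b True] .
      thus ?thesis using True b Gamma_real_pos[OF b]
        by (simp add: P_def ennreal_mult'[symmetric] e[symmetric] mult_ac)
    qed (simp add: P_def indicator_def)
  qed
  also have "\<dots> = ennreal (Gamma b) * ennreal (Gamma a * A powr (-a))"
    unfolding P_def by (subst nn_integral_cmult) (use a A in \<open>simp_all add: nn_integral_powr_exp_scaled\<close>)
  also have "\<dots> = ennreal (Gamma a * Gamma b * A powr (-a))"
    using Gamma_real_pos[OF a] Gamma_real_pos[OF b] A by (simp add: ennreal_mult'[symmetric])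
  finally show ?thesis unfolding G_def .
qed

lemma nn_integral_beta_shifted:
  fixes a b A :: real assumes a: "a > 0" and b: "b > 0" and A: "A > 0"
  shows "(\<integral>\<^sup>+s. ennreal (indicator {0<..} s * s powr (b - 1) * (A + s) powr (-(a+b))) \<partial>lborel)
         = ennreal (Beta a b * A powr (-a))"
proof -
  define G where "G = Gamma (a + b)"
  have G: "G > 0" unfolding G_def using a b by (intro Gamma_real_pos) auto
  let ?L = "(\<integral>\<^sup>+s. ennreal (indicator {0<..} s * s powr (b - 1) * (A + s) powr (-(a+b))) \<partial>lborel)"
  have "?L = ?L * ennreal G * ennreal (1 / G)"
    using G by (simp add: mult.assoc ennreal_mult'[symmetric])
  also have "?L * ennreal G = ennreal (Beta a b * A powr (-a)) * ennreal G"
    using nn_integral_beta_shifted_mult_Gamma[OF a b A] G Gamma_real_pos[OF a] Gamma_real_pos[OF b] A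
    by (simp add: G_def Beta_def ennreal_mult'[symmetric])
  also have "ennreal (Beta a b * A powr (-a)) * ennreal G * ennreal (1 / G) = ennreal (Beta a b * A powr (-a))"
    using G by (simp add: mult.assoc ennreal_mult'[symmetric])
  finally show ?thesis .
qed

lemma Beta_real_pos: "a > 0 \<Longrightarrow> b > 0 \<Longrightarrow> Beta a b > (0::real)"
  by (simp add: Beta_def Gamma_real_pos)

lemma integrable_beta_shifted:
  fixes b g :: real assumes b: "b > 0" and bg: "b < g"
  shows "integrable lborel (\<lambda>s. indicator {0<..} s * s powr (b - 1) * (1 + s) powr (-g))"
proof (rule integrableI_nonneg)
  show "(\<lambda>s. indicator {0<..} s * s powr (b - 1) * (1 + s) powr (-g)) \<in> borel_measurable lborel"
    by measurable
  show "AE x in lborel. 0 \<le> indicat_real {0<..} x * x powr (b - 1) * (1 + x) powr - g"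
    by (auto simp: indicator_def)
  have "(\<integral>\<^sup>+s. ennreal (indicator {0<..} s * s powr (b - 1) * (1 + s) powr (-((g - b) + b))) \<partial>lborel)
         = ennreal (Beta (g - b) b * 1 powr (-(g - b)))"
    using nn_integral_beta_shifted[of "g - b" b 1] b bg by simp
  thus "(\<integral>\<^sup>+s. ennreal (indicator {0<..} s * s powr (b - 1) * (1 + s) powr (-g)) \<partial>lborel) < \<infinity>"
    by simp
qed

lemma integral_beta_shifted:
  fixes a b :: real assumes a: "a > 0" and b: "b > 0"
  shows "(\<integral>s. indicator {0<..} s * s powr (b - 1) * (1 + s) powr (-(a + b)) \<partial>lborel) = Beta a b"
proof -
  have "(\<integral>s. indicator {0<..} s * s powr (b - 1) * (1 + s) powr (-(a + b)) \<partial>lborel)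
      = enn2real (\<integral>\<^sup>+s. ennreal (indicator {0<..} s * s powr (b - 1) * (1 + s) powr (-(a + b))) \<partial>lborel)"
    by (rule integral_eq_nn_integral) auto
  also have "\<dots> = Beta a b"
    using nn_integral_beta_shifted[OF a b, of 1] a b by (simp add: Beta_def Gamma_real_pos less_imp_le)
  finally show ?thesis .
qed

lemma set_integral_beta_at_one:
  fixes a b :: real assumes a: "a > 0" and b: "b > 0"
  shows "(LINT s:{0<..}|lborel. of_real s powr (of_real b - 1) * (of_real s + 1) powr (- of_real (a + b)))
    = complex_of_real (Beta a b)"
proof -
  have "(LINT s:{0<..}|lborel. of_real s powr (of_real b - 1) * (of_real s + 1) powr (- of_real (a + b)))
      = (\<integral>s. complex_of_real (indicator {0<..} s * s powr (b - 1) * (1 + s) powr (-(a + b))) \<partial>lborel)"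
    unfolding set_lebesgue_integral_def
  proof (intro Bochner_Integration.integral_cong refl)
    fix s :: real
    show "indicator {0<..} s *\<^sub>R (of_real s powr (of_real b - 1) * (of_real s + 1) powr (- of_real (a + b)))
        = complex_of_real (indicator {0<..} s * s powr (b - 1) * (1 + s) powr (-(a + b)))"
    proof (cases "s > 0")
      case True
      have "(complex_of_real s + 1) powr (- of_real (a + b)) = of_real ((1 + s) powr (-(a + b)))"
        using True powr_of_real[of "1 + s" "-(a + b)"] by (simp add: add.commute)
      moreover have "complex_of_real s powr (of_real b - 1) = of_real (s powr (b - 1))"
        using True powr_of_real[of s "b - 1"] by simp
      ultimately show ?thesis using True by simp
    qed simp
  qed
  also have "\<dots> = of_real (\<integral>s. indicator {0<..} s * s powr (b - 1) * (1 + s) powr (-(a + b)) \<partial>lborel)"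
    by (rule integral_complex_of_real)
  also have "(\<integral>s. indicator {0<..} s * s powr (b - 1) * (1 + s) powr (-(a + b)) \<partial>lborel) = Beta a b"
    by (rule integral_beta_shifted[OF a b])
  finally show ?thesis .
qed

section \<open>Linear growth off the negative real axis\<close>

lemma linear_lower_bound_of_two_bounds:
  fixes x s d M :: real
  assumes "d > 0" "M \<ge> 0" "s \<ge> 0" "x \<ge> d" "x \<ge> s - M"
  shows "d / (M + d + 1) * (1 + s) \<le> x"
proof (cases "s \<le> M + d")
  case True
  have "d / (M + d + 1) * (1 + s) \<le> d / (M + d + 1) * (M + d + 1)"
    using assms True by (intro mult_left_mono) auto
  also have "\<dots> = d" using assms by simp
  finally show ?thesis using assms by simp
next
  case False
  have "(s - M) * (M + d + 1) - d * (1 + s) = (s - (M + d)) * (M + 1)"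
    by algebra
  moreover have "0 \<le> (s - (M + d)) * (M + 1)"
    using False assms by simp
  ultimately have "d * (1 + s) \<le> (s - M) * (M + d + 1)"
    by linarith
  hence "d / (M + d + 1) * (1 + s) \<le> s - M"
    using assms by (simp add: field_simps)
  thus ?thesis using assms by simp
qed

lemma compact_disjoint_nonpos_Reals_bound:
  fixes K :: "complex set"
  assumes K: "compact K" "K \<inter> \<real>\<^sub>\<le>\<^sub>0 = {}"
  obtains c where "c > 0" "\<And>w s. w \<in> K \<Longrightarrow> s \<ge> 0 \<Longrightarrow> c * (1 + s) \<le> norm (of_real s + w)"
proof -
  obtain d where d: "d > 0" and hd: "\<And>w y. w \<in> K \<Longrightarrow> y \<in> \<real>\<^sub>\<le>\<^sub>0 \<Longrightarrow> d \<le> dist w y"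
    using separate_compact_closed[OF K(1) closed_nonpos_Reals_complex K(2)] by blast
  obtain M where M: "M > 0" and hM: "\<And>w. w \<in> K \<Longrightarrow> norm w \<le> M"
    using compact_imp_bounded[OF K(1)] unfolding bounded_pos by blast
  show ?thesis
  proof (rule that[of "d / (M + d + 1)"])
    show "d / (M + d + 1) > 0" using d M by simp
    fix w s assume w: "w \<in> K" and s: "(s::real) \<ge> 0"
    show "d / (M + d + 1) * (1 + s) \<le> norm (of_real s + w)"
    proof (rule linear_lower_bound_of_two_bounds[OF d less_imp_le[OF M] s])
      have "- complex_of_real s \<in> \<real>\<^sub>\<le>\<^sub>0" using s by (simp add: complex_nonpos_Reals_iff)
      from hd[OF w this] show "d \<le> norm (of_real s + w)"
        by (simp add: dist_norm add.commute)
      have "norm (complex_of_real s) \<le> norm (of_real s + w) + norm w"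
        by (metis add_diff_cancel_right' norm_triangle_ineq4)
      thus "s - M \<le> norm (of_real s + w)" using hM[OF w] s by simp
    qed
  qed
qed

lemma upper_half_plane_linear_bound:
  fixes z :: complex
  assumes z: "Im z > 0"
  obtains c where "c > 0" "\<And>t. c * (1 + \<bar>t\<bar>) \<le> norm (z + of_real t)"
proof -
  have disj: "{z, -z} \<inter> \<real>\<^sub>\<le>\<^sub>0 = {}" using z by (auto simp: complex_nonpos_Reals_iff)
  obtain c where c: "c > 0"
    and hc: "\<And>w s. w \<in> {z, -z} \<Longrightarrow> s \<ge> 0 \<Longrightarrow> c * (1 + s) \<le> norm (of_real s + w)"
    by (rule compact_disjoint_nonpos_Reals_bound[OF _ disj]) auto
  show ?thesis
  proof (rule that[OF c])
    fix t :: real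
    show "c * (1 + \<bar>t\<bar>) \<le> norm (z + of_real t)"
    proof (cases "t \<ge> 0")
      case True
      thus ?thesis using hc[of z t] by (simp add: add.commute)
    next
      case False
      have "of_real (- t) + - z = - (z + of_real t)"
        by simp
      hence "norm (z + of_real t) = norm (of_real (- t) + - z)"
        by (simp only: norm_minus_cancel)
      thus ?thesis using hc[of "-z" "-t"] False by simp
    qed
  qed
qed

lemma add_nonneg_notin_nonpos_Reals:
  "v \<notin> \<real>\<^sub>\<le>\<^sub>0 \<Longrightarrow> s \<ge> 0 \<Longrightarrow> complex_of_real s + v \<notin> \<real>\<^sub>\<le>\<^sub>0"
  by (auto simp: complex_nonpos_Reals_iff)

lemma closed_segment_one_disjoint_nonpos_Reals:
  fixes u :: complex
  assumes u: "u \<notin> \<real>\<^sub>\<le>\<^sub>0"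
  shows "closed_segment 1 u \<inter> \<real>\<^sub>\<le>\<^sub>0 = {}"
proof -
  have "(1 - p) *\<^sub>R 1 + p *\<^sub>R u \<notin> \<real>\<^sub>\<le>\<^sub>0" if p: "0 \<le> p" "p \<le> 1" for p
  proof (cases "Im u = 0")
    case True
    hence "Re u > 0" using u by (auto simp: complex_nonpos_Reals_iff)
    hence "0 < (1 - p) + p * Re u" using p by (cases "p = 0") (auto intro: add_nonneg_pos)
    thus ?thesis by (simp add: complex_nonpos_Reals_iff scaleR_conv_of_real)
  next
    case False
    thus ?thesis using p by (cases "p = 0") (auto simp: complex_nonpos_Reals_iff scaleR_conv_of_real)
  qed
  thus ?thesis by (auto simp: in_segment)
qed

lemma norm_of_real_powr: "s \<ge> 0 \<Longrightarrow> norm (complex_of_real s powr complex_of_real e) = s powr e"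
  by (simp add: powr_of_real)

lemma norm_of_real_powr_minus_one:
  "s \<ge> 0 \<Longrightarrow> norm (complex_of_real s powr (complex_of_real e - 1)) = s powr (e - 1)"
  using norm_of_real_powr[of s "e - 1"] by simp

lemma norm_powr_neg_le:
  fixes w :: complex and r e :: real
  assumes "0 < r" "r \<le> norm w" "e \<ge> 0"
  shows "norm (w powr (- of_real e)) \<le> r powr (-e)"
proof -
  have "norm (w powr (- of_real e)) = norm w powr (-e)"
    by (subst norm_powr_real_powr') auto
  also have "\<dots> \<le> r powr (-e)"
    using assms by (intro powr_mono2') auto
  finally show ?thesis .
qed

lemma norm_powr_le_of_bounds:
  fixes w :: complex and c M e :: real
  assumes "c > 0" "c \<le> norm w" "norm w \<le> M"
  shows "norm (w powr of_real e) \<le> c powr e + M powr e"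
proof -
  have "norm (w powr of_real e) = norm w powr e"
    by (subst norm_powr_real_powr') auto
  also have "\<dots> \<le> c powr e + M powr e"
  proof (cases "e \<ge> 0")
    case True
    hence "norm w powr e \<le> M powr e" using assms by (intro powr_mono2) auto
    thus ?thesis using powr_ge_zero[of c e] by linarith
  next
    case False
    hence "norm w powr e \<le> c powr e" using assms by (intro powr_mono2') auto
    thus ?thesis using powr_ge_zero[of M e] by linarith
  qed
  finally show ?thesis .
qed

lemma norm_inverse_powr_upper_half_plane_le:
  fixes z :: complex and e :: real
  assumes z: "Im z > 0" and e: "e \<ge> 0"
  obtains K where "\<And>\<tau>. norm (1 / (z + of_real \<tau>) powr of_real e) \<le> K * (1 + \<bar>\<tau>\<bar>) powr (-e)"
proof -
  obtain c where c: "c > 0" and hc: "\<And>t. c * (1 + \<bar>t\<bar>) \<le> norm (z + of_real t)"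
    using upper_half_plane_linear_bound[OF z] by blast
  have "norm (1 / (z + of_real \<tau>) powr of_real e) \<le> c powr (-e) * (1 + \<bar>\<tau>\<bar>) powr (-e)" for \<tau>
  proof -
    have "norm ((z + of_real \<tau>) powr (- of_real e)) \<le> (c * (1 + \<bar>\<tau>\<bar>)) powr (-e)"
      using c e by (intro norm_powr_neg_le hc) auto
    thus ?thesis using c by (simp only: powr_minus_divide) (simp add: powr_mult)
  qed
  thus ?thesis by (rule that)
qed

section \<open>The complex Beta integral\<close>

(* s^b (s + v)^(-g): the derivative of the Beta integrand along a path in v is a multiple of its
   s-derivative (has_field_derivative_beta_weighted), hence integrates to zero over s > 0. *)
definition beta_prim :: "real \<Rightarrow> real \<Rightarrow> complex \<Rightarrow> real \<Rightarrow> complex" where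
  "beta_prim b g v s = of_real s powr of_real b * (of_real s + v) powr (- of_real g)"

definition beta_prim_deriv :: "real \<Rightarrow> real \<Rightarrow> complex \<Rightarrow> real \<Rightarrow> complex" where
  "beta_prim_deriv b g v s = of_real b * of_real s powr (of_real b - 1) * (of_real s + v) powr (- of_real g)
     - of_real g * of_real s powr of_real b * (of_real s + v) powr (- of_real g - 1)"

lemma has_vector_derivative_beta_prim:
  assumes s: "s > 0" and sv: "of_real s + v \<notin> \<real>\<^sub>\<le>\<^sub>0"
  shows "(beta_prim b g v has_vector_derivative beta_prim_deriv b g v s) (at s)"
proof -
  have "((\<lambda>z. z powr of_real b * (z + v) powr (- of_real g)) has_field_derivative
      of_real b * of_real s powr (of_real b - 1) * (of_real s + v) powr (- of_real g)
      + of_real s powr of_real b * (- of_real g * (of_real s + v) powr (- of_real g - 1) * 1))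
      (at (complex_of_real s))"
    using s sv by (auto intro!: derivative_eq_intros simp: complex_nonpos_Reals_iff)
  from has_vector_derivative_real_field[OF this] show ?thesis
    unfolding beta_prim_def beta_prim_deriv_def by (simp add: algebra_simps)
qed

context
  fixes b g c :: real and v :: complex
  assumes b: "b > 0" and bg: "b < g" and c: "c > 0"
    and hc: "\<And>s. s \<ge> 0 \<Longrightarrow> c * (1 + s) \<le> norm (of_real s + v)"
begin

lemma norm_shifted_powr_le:
  assumes "s \<ge> 0" "e \<ge> 0"
  shows "norm ((of_real s + v) powr (- of_real e)) \<le> c powr (-e) * (1 + s) powr (-e)"
proof -
  have "norm ((of_real s + v) powr (- of_real e)) \<le> (c * (1 + s)) powr (-e)"
    using assms c by (intro norm_powr_neg_le hc) auto
  thus ?thesis using assms c by (simp add: powr_mult)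
qed

lemma norm_beta_integrand_le:
  assumes s: "s > 0"
  shows "norm (of_real s powr (of_real b - 1) * (of_real s + v) powr (- of_real g))
          \<le> c powr (-g) * (s powr (b - 1) * (1 + s) powr (-g))"
  using norm_shifted_powr_le[of s g] s b bg
  by (simp add: norm_mult norm_of_real_powr_minus_one mult_left_mono mult_ac)

lemma norm_beta_prim_le:
  assumes s: "s > 0"
  shows "norm (beta_prim b g v s) \<le> c powr (-g) * (s powr b * (1 + s) powr (-g))"
  using norm_shifted_powr_le[of s g] s b bg unfolding beta_prim_def
  by (simp add: norm_mult norm_of_real_powr mult_left_mono mult_ac)

lemma norm_beta_prim_deriv_le:
  assumes s: "s > 0"
  shows "norm (beta_prim_deriv b g v s)
    \<le> (b * c powr (-g) + g * c powr (-g - 1)) * (s powr (b - 1) * (1 + s) powr (-g))"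
proof -
  have n1: "norm ((of_real s + v) powr (- of_real g)) \<le> c powr (-g) * (1 + s) powr (-g)"
    using s b bg by (intro norm_shifted_powr_le) auto
  have "- complex_of_real g - 1 = - of_real (g + 1)" "-g - 1 = - (g + 1)"
    by simp_all
  hence n2: "norm ((of_real s + v) powr (- of_real g - 1)) \<le> c powr (-g - 1) * (1 + s) powr (-g - 1)"
    using norm_shifted_powr_le[of s "g + 1"] s b bg by simp
  have t1: "norm (of_real b * of_real s powr (of_real b - 1) * (of_real s + v) powr (- of_real g))
      \<le> b * c powr (-g) * (s powr (b - 1) * (1 + s) powr (-g))"
    using n1 s b by (simp add: norm_mult norm_of_real_powr_minus_one mult_left_mono mult_ac)
  have "s powr b * (1 + s) powr (-g - 1) = (s / (1 + s)) * (s powr (b - 1) * (1 + s) powr (-g))"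
    using s by (simp add: powr_diff)
  also have "\<dots> \<le> s powr (b - 1) * (1 + s) powr (-g)"
    using s by (intro mult_left_le_one_le) auto
  finally have "g * c powr (-g - 1) * (s powr b * (1 + s) powr (-g - 1))
      \<le> g * c powr (-g - 1) * (s powr (b - 1) * (1 + s) powr (-g))"
    using b bg by (intro mult_left_mono) auto
  moreover have "norm (of_real g * of_real s powr of_real b * (of_real s + v) powr (- of_real g - 1))
      \<le> g * c powr (-g - 1) * (s powr b * (1 + s) powr (-g - 1))"
    using n2 s b bg by (simp add: norm_mult norm_of_real_powr mult_left_mono mult_ac)
  ultimately have t2: "norm (of_real g * of_real s powr of_real b * (of_real s + v) powr (- of_real g - 1))
      \<le> g * c powr (-g - 1) * (s powr (b - 1) * (1 + s) powr (-g))"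
    by linarith
  have "norm (beta_prim_deriv b g v s)
      \<le> norm (of_real b * of_real s powr (of_real b - 1) * (of_real s + v) powr (- of_real g))
        + norm (of_real g * of_real s powr of_real b * (of_real s + v) powr (- of_real g - 1))"
    unfolding beta_prim_deriv_def by (rule norm_triangle_ineq4)
  also have "\<dots> \<le> (b * c powr (-g) + g * c powr (-g - 1)) * (s powr (b - 1) * (1 + s) powr (-g))"
    using t1 t2 by (simp add: algebra_simps)
  finally show ?thesis .
qed

lemma beta_prim_tendsto_0_at_right: "(beta_prim b g v \<longlongrightarrow> 0) (at_right 0)"
proof (rule tendsto_norm_zero_cancel, rule Lim_null_comparison)
  show "\<forall>\<^sub>F s in at_right 0. norm (norm (beta_prim b g v s)) \<le> c powr (-g) * s powr b"
  proof (rule eventually_at_rightI[of 0 1])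
    fix s :: real assume s: "s \<in> {0<..<1}"
    have "(1 + s) powr (-g) \<le> 1 powr (-g)" using s bg b by (intro powr_mono2') auto
    hence "c powr (-g) * (s powr b * (1 + s) powr (-g)) \<le> c powr (-g) * (s powr b * 1)"
      by (intro mult_left_mono) auto
    thus "norm (norm (beta_prim b g v s)) \<le> c powr (-g) * s powr b"
      using norm_beta_prim_le[of s] s by simp
  qed simp
  show "((\<lambda>s. c powr (-g) * s powr b) \<longlongrightarrow> 0) (at_right 0)"
    using b by (auto intro!: tendsto_eq_intros tendsto_zero_powrI eventually_at_rightI[of 0 1])
qed

lemma beta_prim_tendsto_0_at_top: "(beta_prim b g v \<longlongrightarrow> 0) at_top"
proof (rule tendsto_norm_zero_cancel, rule Lim_null_comparison)
  show "\<forall>\<^sub>F s in at_top. norm (norm (beta_prim b g v s)) \<le> c powr (-g) * s powr (b - g)"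
  proof (rule eventually_at_top_linorderI[of 1])
    fix s :: real assume s: "s \<ge> 1"
    have "(1 + s) powr (-g) \<le> s powr (-g)" using s bg b by (intro powr_mono2') auto
    hence "c powr (-g) * (s powr b * (1 + s) powr (-g)) \<le> c powr (-g) * (s powr b * s powr (-g))"
      by (intro mult_left_mono) auto
    also have "s powr b * s powr (-g) = s powr (b - g)" by (simp add: powr_add[symmetric])
    finally show "norm (norm (beta_prim b g v s)) \<le> c powr (-g) * s powr (b - g)"
      using norm_beta_prim_le[of s] s by simp
  qed
  have "((\<lambda>s. s powr (b - g)) \<longlongrightarrow> 0) at_top"
    using bg by (intro tendsto_neg_powr filterlim_ident) auto
  thus "((\<lambda>s. c powr (-g) * s powr (b - g)) \<longlongrightarrow> 0) at_top"
    by (rule tendsto_mult_right_zero)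
qed

lemma set_integrable_beta_prim_deriv: "set_integrable lborel {0<..} (beta_prim_deriv b g v)"
  unfolding set_integrable_def
proof (rule Bochner_Integration.integrable_bound)
  define C where "C = b * c powr (-g) + g * c powr (-g - 1)"
  have C: "C \<ge> 0" unfolding C_def using b bg by simp
  show "integrable lborel (\<lambda>s. C * (indicator {0<..} s * s powr (b - 1) * (1 + s) powr (-g)))"
    by (intro integrable_mult_right integrable_beta_shifted b bg)
  show "(\<lambda>s. indicat_real {0<..} s *\<^sub>R beta_prim_deriv b g v s) \<in> borel_measurable lborel"
    unfolding beta_prim_deriv_def by measurable
  show "AE s in lborel. norm (indicat_real {0<..} s *\<^sub>R beta_prim_deriv b g v s)
      \<le> norm (C * (indicator {0<..} s * s powr (b - 1) * (1 + s) powr (-g)))"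
  proof (rule AE_I2)
    fix s :: real
    show "norm (indicat_real {0<..} s *\<^sub>R beta_prim_deriv b g v s)
      \<le> norm (C * (indicator {0<..} s * s powr (b - 1) * (1 + s) powr (-g)))"
    proof (cases "s > 0")
      case True
      thus ?thesis using norm_beta_prim_deriv_le[OF True] C by (simp add: C_def abs_mult)
    qed (simp add: indicator_def)
  qed
qed

lemma set_integrable_beta_integrand:
  "set_integrable lborel {0<..} (\<lambda>s. of_real s powr (of_real b - 1) * (of_real s + v) powr (- of_real g))"
  unfolding set_integrable_def
proof (rule Bochner_Integration.integrable_bound)
  show "integrable lborel (\<lambda>s. c powr (-g) * (indicator {0<..} s * s powr (b - 1) * (1 + s) powr (-g)))"
    by (intro integrable_mult_right integrable_beta_shifted b bg)
  show "(\<lambda>s. indicat_real {0<..} s *\<^sub>R (of_real s powr (of_real b - 1) * (of_real s + v) powr (- of_real g)))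
      \<in> borel_measurable lborel"
    by measurable
  show "AE s in lborel. norm (indicat_real {0<..} s *\<^sub>R (of_real s powr (of_real b - 1) * (of_real s + v) powr (- of_real g)))
      \<le> norm (c powr (-g) * (indicator {0<..} s * s powr (b - 1) * (1 + s) powr (-g)))"
  proof (rule AE_I2)
    fix s :: real
    show "norm (indicat_real {0<..} s *\<^sub>R (of_real s powr (of_real b - 1) * (of_real s + v) powr (- of_real g)))
      \<le> norm (c powr (-g) * (indicator {0<..} s * s powr (b - 1) * (1 + s) powr (-g)))"
    proof (cases "s > 0")
      case True
      thus ?thesis using norm_beta_integrand_le[OF True] by (simp add: abs_mult)
    qed (simp add: indicator_def)
  qed
qed

end

lemma set_integral_beta_prim_deriv:
  assumes b: "b > 0" and bg: "b < g" and v: "v \<notin> \<real>\<^sub>\<le>\<^sub>0"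
  shows "(LINT s:{0<..}|lborel. beta_prim_deriv b g v s) = 0"
proof -
  have "{v} \<inter> \<real>\<^sub>\<le>\<^sub>0 = {}" using v by simp
  then obtain c where c: "c > 0"
    and hc: "\<And>w s. w \<in> {v} \<Longrightarrow> s \<ge> 0 \<Longrightarrow> c * (1 + s) \<le> norm (of_real s + w)"
    using compact_disjoint_nonpos_Reals_bound[OF compact_sing] by blast
  note hc = hc[OF singletonI]
  have "(LBINT s=ereal 0..\<infinity>. beta_prim_deriv b g v s) = 0 - 0"
  proof (rule interval_integral_FTC_integrable)
    fix s assume "ereal 0 < ereal s" "ereal s < \<infinity>"
    hence s: "s > 0" by simp
    have sv: "of_real s + v \<notin> \<real>\<^sub>\<le>\<^sub>0" using add_nonneg_notin_nonpos_Reals[OF v] s by simp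
    show "(beta_prim b g v has_vector_derivative beta_prim_deriv b g v s) (at s)"
      by (rule has_vector_derivative_beta_prim[OF s sv])
    show "isCont (beta_prim_deriv b g v) s"
      unfolding beta_prim_deriv_def using s sv
      by (intro continuous_intros) (auto simp: Lim_ident_at complex_nonpos_Reals_iff complex_eq_iff)
  next
    show "set_integrable lborel (einterval (ereal 0) \<infinity>) (beta_prim_deriv b g v)"
      using set_integrable_beta_prim_deriv[OF b bg c hc] by simp
    show "((beta_prim b g v \<circ> real_of_ereal) \<longlongrightarrow> 0) (at_right (ereal 0))"
      unfolding ereal_tendsto_simps using beta_prim_tendsto_0_at_right[OF b bg c hc] .
    show "((beta_prim b g v \<circ> real_of_ereal) \<longlongrightarrow> 0) (at_left \<infinity>)"
      unfolding ereal_tendsto_simps using beta_prim_tendsto_0_at_top[OF b bg c hc] .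
  qed simp
  thus ?thesis
    by (simp add: interval_lebesgue_integral_def einterval_def greaterThan_def)
qed

lemma (in pair_sigma_finite) integrable_product_mult:
  fixes f :: "'a \<Rightarrow> real" and h :: "'b \<Rightarrow> real"
  assumes f: "integrable M1 f" and h: "integrable M2 h"
    and f0: "\<And>x. f x \<ge> 0" and h0: "\<And>y. h y \<ge> 0"
  shows "integrable (M1 \<Otimes>\<^sub>M M2) (\<lambda>(x, y). f x * h y)"
proof (rule integrableI_nonneg)
  have [measurable]: "f \<in> borel_measurable M1" "h \<in> borel_measurable M2"
    using f h by auto
  show "(\<lambda>(x, y). f x * h y) \<in> borel_measurable (M1 \<Otimes>\<^sub>M M2)"
    by measurable
  show "AE z in M1 \<Otimes>\<^sub>M M2. 0 \<le> (case z of (x, y) \<Rightarrow> f x * h y)"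
    using f0 h0 by (auto intro!: AE_I2)
  have "(\<integral>\<^sup>+ z. ennreal (case z of (x, y) \<Rightarrow> f x * h y) \<partial>(M1 \<Otimes>\<^sub>M M2))
      = (\<integral>\<^sup>+ x. \<integral>\<^sup>+ y. ennreal (f x) * ennreal (h y) \<partial>M2 \<partial>M1)"
    using f0 h0 by (subst M2.nn_integral_fst[symmetric]) (auto simp: case_prod_unfold ennreal_mult)
  also have "\<dots> = (\<integral>\<^sup>+ x. ennreal (f x) \<partial>M1) * (\<integral>\<^sup>+ y. ennreal (h y) \<partial>M2)"
    by (simp add: nn_integral_cmult nn_integral_multc)
  also have "\<dots> < \<infinity>"
    using f h f0 h0 by (simp add: nn_integral_eq_integral ennreal_mult_less_top)
  finally show "(\<integral>\<^sup>+ z. ennreal (case z of (x, y) \<Rightarrow> f x * h y) \<partial>(M1 \<Otimes>\<^sub>M M2)) < \<infinity>" .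
qed

(* Fubini on S x [0,1] together with the fundamental theorem of calculus in p. *)
lemma set_integral_eq_if_deriv_integrals_vanish:
  fixes F D :: "real \<Rightarrow> real \<Rightarrow> complex" and G :: "real \<Rightarrow> real" and S :: "real set"
  assumes S: "S \<in> sets lborel"
    and deriv: "\<And>s p. s \<in> S \<Longrightarrow> p \<in> {0..1} \<Longrightarrow> (F s has_vector_derivative D s p) (at p within {0..1})"
    and cont: "\<And>s. s \<in> S \<Longrightarrow> continuous_on {0..1} (D s)"
    and meas: "(\<lambda>(s, p). D s p) \<in> borel_measurable (lborel \<Otimes>\<^sub>M lborel)"
    and G: "integrable lborel G" and bound: "\<And>s p. s \<in> S \<Longrightarrow> p \<in> {0..1} \<Longrightarrow> norm (D s p) \<le> G s"
    and vanish: "\<And>p. p \<in> {0..1} \<Longrightarrow> (LINT s:S|lborel. D s p) = 0"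
    and F0: "set_integrable lborel S (\<lambda>s. F s 0)" and F1: "set_integrable lborel S (\<lambda>s. F s 1)"
  shows "(LINT s:S|lborel. F s 1) = (LINT s:S|lborel. F s 0)"
proof -
  define H where "H s p = indicator S s *\<^sub>R (indicator {0..1} p *\<^sub>R D s p)" for s p
  have G0: "G s \<ge> 0" if "s \<in> S" for s
    using order_trans[OF norm_ge_zero bound[OF that, of 0]] by simp
  have GS: "integrable lborel (\<lambda>s. indicator S s * G s)"
    using integrable_mult_indicator[OF S G] by simp
  have I01: "integrable lborel (indicator {0..1} :: real \<Rightarrow> real)"
    by (rule integrable_real_indicator) auto
  have "integrable (lborel \<Otimes>\<^sub>M lborel) (\<lambda>(s, p::real). indicator S s * G s * indicator {0..1} p)"
    by (rule lborel_pair.integrable_product_mult[OF GS I01]) (simp_all add: indicator_def G0)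
  hence H: "integrable (lborel \<Otimes>\<^sub>M lborel) (\<lambda>(s, p). H s p)"
  proof (rule Bochner_Integration.integrable_bound)
    show "(\<lambda>(s, p). H s p) \<in> borel_measurable (lborel \<Otimes>\<^sub>M lborel)"
      unfolding H_def using meas S by measurable
    show "AE z in lborel \<Otimes>\<^sub>M lborel.
        norm (case z of (s, p) \<Rightarrow> H s p) \<le> norm (case z of (s, p) \<Rightarrow> indicator S s * G s * indicator {0..1} p)"
      using bound G0 by (intro AE_I2) (auto simp: H_def indicator_def)
  qed
  have inner: "(\<integral>s. H s p \<partial>lborel) = 0" for p
    using vanish[of p] by (cases "p \<in> {0..1}") (simp_all add: H_def set_lebesgue_integral_def)
  have outer: "(\<integral>p. H s p \<partial>lborel) = indicator S s *\<^sub>R (F s 1 - F s 0)" for s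
  proof (cases "s \<in> S")
    case True
    have "(LBINT p=ereal 0..ereal 1. D s p) = F s 1 - F s 0"
      using deriv[OF True] cont[OF True] by (intro interval_integral_FTC_finite) auto
    thus ?thesis using True
      by (simp add: H_def interval_integral_Icc set_lebesgue_integral_def)
  qed (simp add: H_def)
  have "0 = (\<integral>s. (\<integral>p. H s p \<partial>lborel) \<partial>lborel)"
    using lborel_pair.Fubini_integral[OF H] inner by simp
  also have "\<dots> = (LINT s:S|lborel. F s 1) - (LINT s:S|lborel. F s 0)"
    using F0 F1 unfolding outer set_lebesgue_integral_def set_integrable_def
    by (simp add: scaleR_diff_right)
  finally show ?thesis by simp
qed

lemma has_field_derivative_beta_weighted:
  fixes a b s :: real and w :: complex
  assumes w: "w \<notin> \<real>\<^sub>\<le>\<^sub>0" and s: "s > 0"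
  shows "((\<lambda>w. w powr of_real a * (of_real s powr (of_real b - 1) * (of_real s + w) powr (- of_real (a + b))))
    has_field_derivative - (w powr (of_real a - 1) * beta_prim_deriv b (a + b) w s)) (at w)"
proof -
  have sw: "of_real s + w \<notin> \<real>\<^sub>\<le>\<^sub>0" using add_nonneg_notin_nonpos_Reals[OF w] s by simp
  have "w \<noteq> 0" "of_real s + w \<noteq> 0" using w sw by auto
  hence "w powr of_real a = w * w powr (of_real a - 1)"
      "complex_of_real s powr of_real b = of_real s * of_real s powr (of_real b - 1)"
      "(of_real s + w) powr (- of_real (a + b)) = (of_real s + w) * (of_real s + w) powr (- of_real (a + b) - 1)"
    using s powr_add[of w 1 "of_real a - 1"] powr_add[of "complex_of_real s" 1 "of_real b - 1"]
      powr_add[of "of_real s + w" 1 "- of_real (a + b) - 1"] by auto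
  hence "of_real a * w powr (of_real a - 1) * (of_real s powr (of_real b - 1) * (of_real s + w) powr (- of_real (a + b)))
      + w powr of_real a * (of_real s powr (of_real b - 1) * (- of_real (a + b) * (of_real s + w) powr (- of_real (a + b) - 1) * 1))
      = - (w powr (of_real a - 1) * beta_prim_deriv b (a + b) w s)"
    unfolding beta_prim_deriv_def by (simp add: algebra_simps)
  moreover have "((\<lambda>w. w powr of_real a * (of_real s powr (of_real b - 1) * (of_real s + w) powr (- of_real (a + b))))
    has_field_derivative of_real a * w powr (of_real a - 1) * (of_real s powr (of_real b - 1) * (of_real s + w) powr (- of_real (a + b)))
      + w powr of_real a * (of_real s powr (of_real b - 1) * (- of_real (a + b) * (of_real s + w) powr (- of_real (a + b) - 1) * 1))) (at w)"
    using w sw by (auto intro!: derivative_eq_intros)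
  ultimately show ?thesis by simp
qed

lemma isCont_beta_prim_deriv_weighted:
  assumes w: "w \<notin> \<real>\<^sub>\<le>\<^sub>0" and s: "s > 0"
  shows "isCont (\<lambda>w. w powr (of_real a - 1) * beta_prim_deriv b g w s) w"
proof -
  have sw: "of_real s + w \<notin> \<real>\<^sub>\<le>\<^sub>0" using add_nonneg_notin_nonpos_Reals[OF w] s by simp
  have "complex_of_real s \<notin> \<real>\<^sub>\<le>\<^sub>0" using s by (simp add: complex_nonpos_Reals_iff)
  thus ?thesis unfolding beta_prim_deriv_def
    by (intro isCont_mult isCont_diff isCont_add isCont_powr_complex continuous_const continuous_ident w sw)
qed

lemma norm_weighted_beta_prim_deriv_le:
  fixes a b c M s :: real and w :: complex
  assumes b: "b > 0" and a: "a > 0" and c: "c > 0" and s: "s > 0" and M: "norm w \<le> M"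
    and hc: "\<And>s. s \<ge> 0 \<Longrightarrow> c * (1 + s) \<le> norm (of_real s + w)"
  shows "norm (w powr (of_real a - 1) * beta_prim_deriv b (a + b) w s)
    \<le> (c powr (a - 1) + M powr (a - 1)) * (b * c powr (-(a + b)) + (a + b) * c powr (-(a + b) - 1))
      * (s powr (b - 1) * (1 + s) powr (-(a + b)))"
proof -
  have "norm (w powr (of_real a - 1)) \<le> c powr (a - 1) + M powr (a - 1)"
    using norm_powr_le_of_bounds[OF c _ M, of "a - 1"] hc[of 0] by simp
  moreover have "norm (beta_prim_deriv b (a + b) w s)
      \<le> (b * c powr (-(a + b)) + (a + b) * c powr (-(a + b) - 1)) * (s powr (b - 1) * (1 + s) powr (-(a + b)))"
    using norm_beta_prim_deriv_le[of b "a + b" c w s] b a c hc s by simp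
  ultimately have "norm (w powr (of_real a - 1)) * norm (beta_prim_deriv b (a + b) w s)
    \<le> (c powr (a - 1) + M powr (a - 1)) * ((b * c powr (-(a + b)) + (a + b) * c powr (-(a + b) - 1))
      * (s powr (b - 1) * (1 + s) powr (-(a + b))))"
    by (intro mult_mono) auto
  thus ?thesis by (simp only: norm_mult mult.assoc)
qed

(* For real u > 0 this is the substitution s = u s'; in general u is moved to 1 along a segment,
   and the derivative along the segment integrates to zero in s. *)
lemma powr_mult_set_integral_beta_integrand:
  fixes a b :: real and u :: complex
  assumes a: "a > 0" and b: "b > 0" and u: "u \<notin> \<real>\<^sub>\<le>\<^sub>0"
  shows "u powr of_real a
      * (LINT s:{0<..}|lborel. of_real s powr (of_real b - 1) * (of_real s + u) powr (- of_real (a + b)))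
    = (LINT s:{0<..}|lborel. of_real s powr (of_real b - 1) * (of_real s + 1) powr (- of_real (a + b)))"
proof -
  have bg: "b < a + b" using a by simp
  define f where "f w s = of_real s powr (of_real b - 1) * (of_real s + w) powr (- of_real (a + b))" for w :: complex and s :: real
  define F where "F s = (\<lambda>w. w powr of_real a * f w s) \<circ> linepath 1 u" for s :: real
  define D where "D s p = (u - 1) * - (linepath 1 u p powr (of_real a - 1) * beta_prim_deriv b (a + b) (linepath 1 u p) s)" for s p :: real
  have seg: "linepath 1 u p \<notin> \<real>\<^sub>\<le>\<^sub>0" if "p \<in> {0..1}" for p
    using closed_segment_one_disjoint_nonpos_Reals[OF u] linepath_in_path[OF that] by blast
  obtain c where c: "c > 0"
    and hc: "\<And>w s. w \<in> closed_segment 1 u \<Longrightarrow> s \<ge> 0 \<Longrightarrow> c * (1 + s) \<le> norm (of_real s + w)"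
    using compact_disjoint_nonpos_Reals_bound[OF compact_segment closed_segment_one_disjoint_nonpos_Reals[OF u]]
    by blast
  obtain M where M: "M > 0" and hM: "\<And>w. w \<in> closed_segment 1 u \<Longrightarrow> norm w \<le> M"
    using compact_imp_bounded[OF compact_segment] unfolding bounded_pos by blast
  define K where "K = norm (u - 1) * (c powr (a - 1) + M powr (a - 1)) * (b * c powr (-(a + b)) + (a + b) * c powr (-(a + b) - 1))"
  have "(LINT s:{0<..}|lborel. F s 1) = (LINT s:{0<..}|lborel. F s 0)"
  proof (rule set_integral_eq_if_deriv_integrals_vanish
      [where G = "\<lambda>s. K * (indicator {0<..} s * s powr (b - 1) * (1 + s) powr (-(a + b)))"])
    fix s p :: real assume s: "s \<in> {0<..}" and p: "p \<in> {0..1}"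
    have "((\<lambda>w. w powr of_real a * f w s) has_field_derivative
        - (linepath 1 u p powr (of_real a - 1) * beta_prim_deriv b (a + b) (linepath 1 u p) s)) (at (linepath 1 u p))"
      unfolding f_def by (rule has_field_derivative_beta_weighted[OF seg[OF p]]) (use s in simp)
    thus "(F s has_vector_derivative D s p) (at p within {0..1})"
      unfolding F_def D_def
      by (rule field_vector_diff_chain_within[OF has_vector_derivative_linepath_within
          has_field_derivative_at_within])
    have "norm (linepath 1 u p powr (of_real a - 1) * beta_prim_deriv b (a + b) (linepath 1 u p) s)
        \<le> (c powr (a - 1) + M powr (a - 1)) * (b * c powr (-(a + b)) + (a + b) * c powr (-(a + b) - 1))
          * (s powr (b - 1) * (1 + s) powr (-(a + b)))"
      using linepath_in_path[OF p] s by (intro norm_weighted_beta_prim_deriv_le b a c hc hM) auto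
    thus "norm (D s p) \<le> K * (indicator {0<..} s * s powr (b - 1) * (1 + s) powr (-(a + b)))"
      using s unfolding D_def K_def norm_mult norm_minus_cancel mult.assoc by (simp add: mult_left_mono)
  next
    fix s :: real assume s: "s \<in> {0<..}"
    have "isCont (D s) p" if "p \<in> {0..1}" for p
    proof -
      have "isCont (\<lambda>p. linepath 1 u p powr (of_real a - 1) * beta_prim_deriv b (a + b) (linepath 1 u p) s) p"
        using isCont_o2[OF continuous_linepath_at isCont_beta_prim_deriv_weighted[OF seg[OF that]]] s by simp
      thus ?thesis unfolding D_def by (rule isCont_mult[OF continuous_const isCont_minus])
    qed
    thus "continuous_on {0..1} (D s)"
      by (simp add: continuous_at_imp_continuous_on)
  next
    fix p :: real assume p: "p \<in> {0..1}"
    have "D s p = (- (u - 1) * linepath 1 u p powr (of_real a - 1)) * beta_prim_deriv b (a + b) (linepath 1 u p) s"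
      for s by (simp add: D_def algebra_simps)
    thus "(LINT s:{0<..}|lborel. D s p) = 0"
      using set_integral_beta_prim_deriv[OF b bg seg[OF p]] by simp
  next
    show "(\<lambda>(s, p). D s p) \<in> borel_measurable (lborel \<Otimes>\<^sub>M lborel)"
      unfolding D_def beta_prim_deriv_def linepath_def by measurable
    show "integrable lborel (\<lambda>s. K * (indicator {0<..} s * s powr (b - 1) * (1 + s) powr (-(a + b))))"
      by (intro integrable_mult_right integrable_beta_shifted b bg)
    have "set_integrable lborel {0<..} (f w)" if "w \<in> closed_segment 1 u" for w
      unfolding f_def by (rule set_integrable_beta_integrand[OF b bg c hc[OF that]])
    thus "set_integrable lborel {0<..} (\<lambda>s. F s 0)" "set_integrable lborel {0<..} (\<lambda>s. F s 1)"
      by (auto simp: F_def linepath_0' linepath_1')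
  qed simp
  thus ?thesis by (simp add: F_def f_def linepath_0' linepath_1')
qed

lemma set_integral_complex_beta:
  fixes a b :: real and u :: complex
  assumes a: "a > 0" and b: "b > 0" and u: "u \<notin> \<real>\<^sub>\<le>\<^sub>0"
  shows "(LINT s:{0<..}|lborel. of_real s powr (of_real b - 1) * (of_real s + u) powr (- of_real (a + b)))
    = of_real (Beta a b) * u powr (- of_real a)"
proof -
  have "u \<noteq> 0" using u by auto
  with powr_mult_set_integral_beta_integrand[OF a b u, unfolded set_integral_beta_at_one[OF a b]]
  show ?thesis by (simp add: powr_minus field_simps)
qed

section \<open>The measure nu2 and the transforms\<close>

(* mu is the density of the finite measure w mu with respect to 1 / w, which is finite everywhere. *)
lemma Mplus_sigma_finite:
  assumes "Mplus a \<mu>"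
  shows "sigma_finite_measure \<mu>"
proof -
  have sets[measurable_cong]: "sets \<mu> = sets borel" using assms by (simp add: Mplus_def)
  define w where "w t = ennreal ((1 + \<bar>t\<bar>) powr (-a))" for t :: real
  define w' where "w' t = ennreal ((1 + \<bar>t\<bar>) powr a)" for t :: real
  have [measurable]: "w \<in> borel_measurable \<mu>" "w' \<in> borel_measurable \<mu>"
    unfolding w_def w'_def by measurable
  have "emeasure (density \<mu> w) (space (density \<mu> w)) = (\<integral>\<^sup>+ t. w t \<partial>\<mu>)"
    by (subst emeasure_density) (auto intro!: nn_integral_cong simp: indicator_def)
  hence "finite_measure (density \<mu> w)"
    using assms by (intro finite_measureI) (simp add: Mplus_def w_def less_top)
  hence "sigma_finite_measure (density (density \<mu> w) w')"
  proof -
    assume "finite_measure (density \<mu> w)"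
    then interpret finite_measure "density \<mu> w" .
    show ?thesis
      by (rule sigma_finite_iff_density_finite[THEN iffD2]) (auto simp: w'_def)
  qed
  also have "density (density \<mu> w) w' = density \<mu> (\<lambda>_. 1)"
  proof -
    have "w t * w' t = 1" for t
      by (simp add: w_def w'_def ennreal_mult'[symmetric] powr_add[symmetric])
    thus ?thesis by (simp add: density_density_eq)
  qed
  finally show ?thesis by (simp add: density_1)
qed

lemma powr_upper_half_plane_reflect:
  fixes x :: complex and c :: real
  assumes x: "Im x > 0"
  shows "x powr (- of_real c) = exp (- \<i> * of_real (pi * c)) * (- x) powr (- of_real c)"
proof -
  have x0: "x \<noteq> 0" using x by auto
  have "Ln x = Ln (- x) + \<i> * pi" using Ln_minus[OF x0] x by auto
  thus ?thesis using x0
    by (simp add: powr_def exp_add[symmetric] algebra_simps)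
qed

(* Riemann-Liouville kernel of order beta, cut off at the support (-oo, 0] of nu_1. *)
definition rl_kernel :: "real \<Rightarrow> real \<Rightarrow> real \<Rightarrow> real" where
  "rl_kernel \<beta> \<tau> t = (if \<tau> < t \<and> t \<le> 0 then (t - \<tau>) powr (\<beta> - 1) else 0)"

lemma rl_kernel_nonneg: "rl_kernel \<beta> \<tau> t \<ge> 0"
  by (simp add: rl_kernel_def)

lemma borel_measurable_rl_kernel [measurable]:
  "(\<lambda>(\<tau>, t). rl_kernel \<beta> \<tau> t) \<in> borel_measurable (borel \<Otimes>\<^sub>M borel)"
  unfolding rl_kernel_def by measurable

lemma nn_integral_rl_kernel_weight:
  fixes \<alpha> \<beta> t :: real assumes a: "\<alpha> > 0" and b: "\<beta> > 0" and t: "t \<le> 0"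
  shows "(\<integral>\<^sup>+ \<tau>. ennreal (rl_kernel \<beta> \<tau> t * (1 + \<bar>\<tau>\<bar>) powr (-(\<alpha> + \<beta>))) \<partial>lborel)
    = ennreal (Beta \<alpha> \<beta> * (1 + \<bar>t\<bar>) powr (-\<alpha>))"
proof -
  have "(\<integral>\<^sup>+ \<tau>. ennreal (rl_kernel \<beta> \<tau> t * (1 + \<bar>\<tau>\<bar>) powr (-(\<alpha> + \<beta>))) \<partial>lborel)
      = (\<integral>\<^sup>+ x. ennreal (rl_kernel \<beta> (t + (-1) * x) t * (1 + \<bar>t + (-1) * x\<bar>) powr (-(\<alpha> + \<beta>))) \<partial>lborel)"
    using nn_integral_real_affine[of "\<lambda>\<tau>. ennreal (rl_kernel \<beta> \<tau> t * (1 + \<bar>\<tau>\<bar>) powr (-(\<alpha> + \<beta>)))" "-1" t]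
    by (simp add: rl_kernel_def)
  also have "\<dots> = (\<integral>\<^sup>+ x. ennreal (indicator {0<..} x * x powr (\<beta> - 1) * ((1 + \<bar>t\<bar>) + x) powr (-(\<alpha> + \<beta>))) \<partial>lborel)"
  proof (intro nn_integral_cong)
    fix x :: real
    show "ennreal (rl_kernel \<beta> (t + (-1) * x) t * (1 + \<bar>t + (-1) * x\<bar>) powr (-(\<alpha> + \<beta>)))
        = ennreal (indicator {0<..} x * x powr (\<beta> - 1) * ((1 + \<bar>t\<bar>) + x) powr (-(\<alpha> + \<beta>)))"
    proof (cases "x > 0")
      case True
      have "1 + \<bar>t + (-1) * x\<bar> = (1 + \<bar>t\<bar>) + x" using True t by simp
      thus ?thesis using True t by (simp only:) (simp add: rl_kernel_def)
    qed (simp add: rl_kernel_def)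
  qed
  also have "\<dots> = ennreal (Beta \<alpha> \<beta> * (1 + \<bar>t\<bar>) powr (-\<alpha>))"
    by (rule nn_integral_beta_shifted[OF a b]) simp
  finally show ?thesis .
qed

lemma integral_rl_kernel_cauchy:
  fixes \<alpha> \<beta> t :: real and z :: complex
  assumes \<alpha>: "\<alpha> > 0" and \<beta>: "\<beta> > 0" and t: "t \<le> 0" and z: "Im z > 0"
  shows "(\<integral> \<tau>. rl_kernel \<beta> \<tau> t *\<^sub>R (1 / (z + of_real \<tau>) powr of_real (\<alpha> + \<beta>)) \<partial>lborel)
    = exp (- \<i> * of_real (pi * \<beta>)) * of_real (Beta \<alpha> \<beta>) * (1 / (z + of_real t) powr of_real \<alpha>)"
proof -
  define u where "u = - (z + of_real t)"
  have u: "u \<notin> \<real>\<^sub>\<le>\<^sub>0" using z by (simp add: u_def complex_nonpos_Reals_iff)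
  have reflect: "(z + of_real (t - x)) powr (- of_real c) = exp (- \<i> * of_real (pi * c)) * (of_real x + u) powr (- of_real c)"
    for x c
  proof -
    have im: "Im (z + of_real (t - x)) > 0" and neg: "- (z + of_real (t - x)) = of_real x + u"
      using z by (simp_all add: u_def)
    from powr_upper_half_plane_reflect[OF im, of c] show ?thesis unfolding neg .
  qed
  have "(\<integral> \<tau>. rl_kernel \<beta> \<tau> t *\<^sub>R (1 / (z + of_real \<tau>) powr of_real (\<alpha> + \<beta>)) \<partial>lborel)
      = (\<integral> x. rl_kernel \<beta> (t - x) t *\<^sub>R (1 / (z + of_real (t - x)) powr of_real (\<alpha> + \<beta>)) \<partial>lborel)"
    using lborel_integral_real_affine[of "-1" "\<lambda>\<tau>. rl_kernel \<beta> \<tau> t *\<^sub>R (1 / (z + of_real \<tau>) powr of_real (\<alpha> + \<beta>))" t]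
    by simp
  also have "\<dots> = exp (- \<i> * of_real (pi * (\<alpha> + \<beta>)))
      * (LINT x:{0<..}|lborel. of_real x powr (of_real \<beta> - 1) * (of_real x + u) powr (- of_real (\<alpha> + \<beta>)))"
    unfolding set_lebesgue_integral_def integral_mult_right_zero[symmetric]
  proof (intro Bochner_Integration.integral_cong refl)
    fix x :: real
    show "rl_kernel \<beta> (t - x) t *\<^sub>R (1 / (z + of_real (t - x)) powr of_real (\<alpha> + \<beta>))
        = exp (- \<i> * of_real (pi * (\<alpha> + \<beta>)))
          * (indicator {0<..} x *\<^sub>R (of_real x powr (of_real \<beta> - 1) * (of_real x + u) powr (- of_real (\<alpha> + \<beta>))))"
    proof (cases "x > 0")
      case True
      have "complex_of_real (x powr (\<beta> - 1)) = of_real x powr (of_real \<beta> - 1)"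
        using True powr_of_real[of x "\<beta> - 1"] by simp
      thus ?thesis using True t
        by (simp only: powr_minus_divide[symmetric] reflect) (simp add: rl_kernel_def scaleR_conv_of_real)
    qed (simp add: rl_kernel_def)
  qed
  also have "\<dots> = exp (- \<i> * of_real (pi * (\<alpha> + \<beta>))) * of_real (Beta \<alpha> \<beta>) * u powr (- of_real \<alpha>)"
    unfolding set_integral_complex_beta[OF \<alpha> \<beta> u] by (simp only: mult.assoc)
  also have "u powr (- of_real \<alpha>) = exp (\<i> * of_real (pi * \<alpha>)) * (z + of_real t) powr (- of_real \<alpha>)"
    using reflect[of 0 \<alpha>] by (simp add: exp_minus field_simps)
  finally show ?thesis
    by (simp add: powr_minus_divide exp_add[symmetric] algebra_simps)
qed

lemma nu2_eq_density_rl_kernel: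
  "nu2 \<alpha> \<beta> \<nu>
      = density lborel (\<lambda>\<tau>. ennreal (1 / Beta \<alpha> \<beta>) * (\<integral>\<^sup>+ t. ennreal (rl_kernel \<beta> \<tau> t) \<partial>\<nu>))"
  unfolding nu2_def
  by (intro arg_cong[where f = "density lborel"] ext arg_cong2[where f = "(*)"] refl nn_integral_cong)
    (auto simp: rl_kernel_def indicator_def)

context
  fixes \<alpha> \<beta> :: real and \<nu> :: "real measure"
  assumes \<alpha>: "\<alpha> > 0" and \<beta>: "\<beta> > 0" and \<nu>: "Mplus \<alpha> \<nu>"
begin

lemma sets_nu [measurable_cong]: "sets \<nu> = sets borel"
  using \<nu> by (simp add: Mplus_def)

interpretation \<nu>: sigma_finite_measure \<nu>
  using Mplus_sigma_finite[OF \<nu>] .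

interpretation lborel_\<nu>: pair_sigma_finite lborel \<nu> ..

lemma borel_measurable_nn_integral_rl_kernel [measurable]:
  "(\<lambda>\<tau>. \<integral>\<^sup>+ t. ennreal (rl_kernel \<beta> \<tau> t) \<partial>\<nu>) \<in> borel_measurable borel"
  by (rule \<nu>.borel_measurable_nn_integral) measurable

lemma nn_integral_rl_kernel_weight_finite:
  "(\<integral>\<^sup>+ t. \<integral>\<^sup>+ \<tau>. ennreal (rl_kernel \<beta> \<tau> t * (1 + \<bar>\<tau>\<bar>) powr (-(\<alpha> + \<beta>))) \<partial>lborel \<partial>\<nu>) < \<infinity>"
proof -
  have "(\<integral>\<^sup>+ t. \<integral>\<^sup>+ \<tau>. ennreal (rl_kernel \<beta> \<tau> t * (1 + \<bar>\<tau>\<bar>) powr (-(\<alpha> + \<beta>))) \<partial>lborel \<partial>\<nu>)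
      = (\<integral>\<^sup>+ t. ennreal (indicator {..0} t * (Beta \<alpha> \<beta> * (1 + \<bar>t\<bar>) powr (-\<alpha>))) \<partial>\<nu>)"
  proof (intro nn_integral_cong)
    fix t :: real
    show "(\<integral>\<^sup>+ \<tau>. ennreal (rl_kernel \<beta> \<tau> t * (1 + \<bar>\<tau>\<bar>) powr (-(\<alpha> + \<beta>))) \<partial>lborel)
        = ennreal (indicator {..0} t * (Beta \<alpha> \<beta> * (1 + \<bar>t\<bar>) powr (-\<alpha>)))"
      using nn_integral_rl_kernel_weight[OF \<alpha> \<beta>, of t] by (cases "t \<le> 0") (simp_all add: rl_kernel_def)
  qed
  also have "\<dots> \<le> (\<integral>\<^sup>+ t. ennreal (Beta \<alpha> \<beta>) * ennreal ((1 + \<bar>t\<bar>) powr (-\<alpha>)) \<partial>\<nu>)"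
    using Beta_real_pos[OF \<alpha> \<beta>] by (intro nn_integral_mono) (auto simp: indicator_def ennreal_mult'[symmetric])
  also have "\<dots> = ennreal (Beta \<alpha> \<beta>) * (\<integral>\<^sup>+ t. ennreal ((1 + \<bar>t\<bar>) powr (-\<alpha>)) \<partial>\<nu>)"
    by (rule nn_integral_cmult) measurable
  also have "\<dots> < \<infinity>"
    using \<nu> by (simp add: Mplus_def ennreal_mult_less_top)
  finally show ?thesis .
qed

lemma nn_integral_nu2:
  fixes g :: "real \<Rightarrow> real"
  assumes [measurable]: "g \<in> borel_measurable borel" and g: "\<And>\<tau>. g \<tau> \<ge> 0"
  shows "(\<integral>\<^sup>+ \<tau>. ennreal (g \<tau>) \<partial>nu2 \<alpha> \<beta> \<nu>)
    = ennreal (1 / Beta \<alpha> \<beta>) * (\<integral>\<^sup>+ t. \<integral>\<^sup>+ \<tau>. ennreal (rl_kernel \<beta> \<tau> t * g \<tau>) \<partial>lborel \<partial>\<nu>)"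
proof -
  have "(\<integral>\<^sup>+ \<tau>. ennreal (g \<tau>) \<partial>nu2 \<alpha> \<beta> \<nu>)
      = (\<integral>\<^sup>+ \<tau>. ennreal (1 / Beta \<alpha> \<beta>) * (\<integral>\<^sup>+ t. ennreal (rl_kernel \<beta> \<tau> t) \<partial>\<nu>) * ennreal (g \<tau>) \<partial>lborel)"
    unfolding nu2_eq_density_rl_kernel
    by (intro nn_integral_density) auto
  also have "\<dots> = ennreal (1 / Beta \<alpha> \<beta>) * (\<integral>\<^sup>+ \<tau>. \<integral>\<^sup>+ t. ennreal (rl_kernel \<beta> \<tau> t * g \<tau>) \<partial>\<nu> \<partial>lborel)"
    using g by (subst nn_integral_cmult[symmetric])
      (auto intro!: nn_integral_cong simp: nn_integral_multc[symmetric] ennreal_mult' rl_kernel_nonneg mult.assoc)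
  also have "(\<integral>\<^sup>+ \<tau>. \<integral>\<^sup>+ t. ennreal (rl_kernel \<beta> \<tau> t * g \<tau>) \<partial>\<nu> \<partial>lborel)
      = (\<integral>\<^sup>+ t. \<integral>\<^sup>+ \<tau>. ennreal (rl_kernel \<beta> \<tau> t * g \<tau>) \<partial>lborel \<partial>\<nu>)"
    by (rule lborel_\<nu>.Fubini'[symmetric]) measurable
  finally show ?thesis .
qed

lemma Mplus_nu2: "Mplus (\<alpha> + \<beta>) (nu2 \<alpha> \<beta> \<nu>)"
proof -
  have "(\<integral>\<^sup>+ \<tau>. ennreal ((1 + \<bar>\<tau>\<bar>) powr (-(\<alpha> + \<beta>))) \<partial>nu2 \<alpha> \<beta> \<nu>)
      = ennreal (1 / Beta \<alpha> \<beta>)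
        * (\<integral>\<^sup>+ t. \<integral>\<^sup>+ \<tau>. ennreal (rl_kernel \<beta> \<tau> t * (1 + \<bar>\<tau>\<bar>) powr (-(\<alpha> + \<beta>))) \<partial>lborel \<partial>\<nu>)"
    by (rule nn_integral_nu2) auto
  also have "\<dots> < \<infinity>"
    using nn_integral_rl_kernel_weight_finite by (simp add: ennreal_mult_less_top)
  finally show ?thesis
    unfolding Mplus_def by (simp add: nu2_def)
qed

(* The density is finite almost everywhere because nu2 integrates a positive weight finitely. *)
lemma nu2_eq_density_real:
  "nu2 \<alpha> \<beta> \<nu>
      = density lborel (\<lambda>\<tau>. ennreal ((\<integral> t. rl_kernel \<beta> \<tau> t \<partial>\<nu>) / Beta \<alpha> \<beta>))"
proof -
  define w where "w \<tau> = ennreal ((1 + \<bar>\<tau>\<bar>) powr (-(\<alpha> + \<beta>)))" for \<tau> :: real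
  define k where "k \<tau> = (\<integral>\<^sup>+ t. ennreal (rl_kernel \<beta> \<tau> t) \<partial>\<nu>)" for \<tau>
  have [measurable]: "k \<in> borel_measurable borel"
    unfolding k_def by measurable
  have "(\<integral>\<^sup>+ \<tau>. ennreal (1 / Beta \<alpha> \<beta>) * k \<tau> * w \<tau> \<partial>lborel)
      = (\<integral>\<^sup>+ \<tau>. w \<tau> \<partial>nu2 \<alpha> \<beta> \<nu>)"
    unfolding nu2_eq_density_rl_kernel k_def[symmetric] w_def by (rule nn_integral_density[symmetric]) auto
  also have "\<dots> < \<infinity>" using Mplus_nu2 by (simp add: Mplus_def w_def)
  finally have "AE \<tau> in lborel. ennreal (1 / Beta \<alpha> \<beta>) * k \<tau> * w \<tau> \<noteq> \<infinity>"
    by (intro nn_integral_PInf_AE) (auto simp: w_def)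
  hence "AE \<tau> in lborel. k \<tau> \<noteq> \<infinity>"
    by eventually_elim (use Beta_real_pos[OF \<alpha> \<beta>] in \<open>auto simp: w_def ennreal_mult_eq_top_iff\<close>)
  hence "AE \<tau> in lborel. ennreal (1 / Beta \<alpha> \<beta>) * k \<tau>
      = ennreal ((\<integral> t. rl_kernel \<beta> \<tau> t \<partial>\<nu>) / Beta \<alpha> \<beta>)"
  proof eventually_elim
    fix \<tau> assume "k \<tau> \<noteq> \<infinity>"
    hence "k \<tau> = ennreal (enn2real (k \<tau>))" by (simp add: less_top)
    moreover have "(\<integral> t. rl_kernel \<beta> \<tau> t \<partial>\<nu>) = enn2real (k \<tau>)"
      unfolding k_def by (rule integral_eq_nn_integral) (auto simp: rl_kernel_nonneg)
    ultimately show "ennreal (1 / Beta \<alpha> \<beta>) * k \<tau>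
        = ennreal ((\<integral> t. rl_kernel \<beta> \<tau> t \<partial>\<nu>) / Beta \<alpha> \<beta>)"
      using Beta_real_pos[OF \<alpha> \<beta>] by (metis divide_nonneg_pos enn2real_nonneg ennreal_mult' mult.commute
          times_divide_eq_right mult_1)
  qed
  thus ?thesis
    unfolding nu2_eq_density_rl_kernel k_def[symmetric] by (intro density_cong) auto
qed

lemma integral_nu2:
  fixes f :: "real \<Rightarrow> complex" and C :: real
  assumes [measurable]: "f \<in> borel_measurable borel"
    and bound: "\<And>\<tau>. norm (f \<tau>) \<le> C * (1 + \<bar>\<tau>\<bar>) powr (-(\<alpha> + \<beta>))"
  shows "integral\<^sup>L (nu2 \<alpha> \<beta> \<nu>) f
      = (\<integral> t. (\<integral> \<tau>. rl_kernel \<beta> \<tau> t *\<^sub>R f \<tau> \<partial>lborel) \<partial>\<nu>) / Beta \<alpha> \<beta>"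
proof -
  have "integrable (lborel \<Otimes>\<^sub>M \<nu>) (\<lambda>(\<tau>, t). rl_kernel \<beta> \<tau> t * (1 + \<bar>\<tau>\<bar>) powr (-(\<alpha> + \<beta>)))"
  proof (rule integrableI_nonneg)
    have "(\<lambda>(\<tau>, t). ennreal (rl_kernel \<beta> \<tau> t * (1 + \<bar>\<tau>\<bar>) powr (-(\<alpha> + \<beta>))))
        \<in> borel_measurable (lborel \<Otimes>\<^sub>M \<nu>)"
      by measurable
    from lborel_\<nu>.nn_integral_snd[OF this] nn_integral_rl_kernel_weight_finite
    show "(\<integral>\<^sup>+ z. ennreal (case z of (\<tau>, t) \<Rightarrow> rl_kernel \<beta> \<tau> t * (1 + \<bar>\<tau>\<bar>) powr (-(\<alpha> + \<beta>))) \<partial>(lborel \<Otimes>\<^sub>M \<nu>)) < \<infinity>"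
      by (simp add: case_prod_beta')
  qed (auto simp: rl_kernel_nonneg)
  hence "integrable (lborel \<Otimes>\<^sub>M \<nu>) (\<lambda>(\<tau>, t). rl_kernel \<beta> \<tau> t *\<^sub>R f \<tau>)"
  proof (rule Bochner_Integration.integrable_bound[OF integrable_mult_right[where c = C]])
    show "AE z in lborel \<Otimes>\<^sub>M \<nu>. norm (case z of (\<tau>, t) \<Rightarrow> rl_kernel \<beta> \<tau> t *\<^sub>R f \<tau>)
        \<le> norm (C * (case z of (\<tau>, t) \<Rightarrow> rl_kernel \<beta> \<tau> t * (1 + \<bar>\<tau>\<bar>) powr (-(\<alpha> + \<beta>))))"
    proof (rule AE_I2, clarify)
      fix \<tau> t :: real
      have "norm (rl_kernel \<beta> \<tau> t *\<^sub>R f \<tau>) = rl_kernel \<beta> \<tau> t * norm (f \<tau>)"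
        by (simp add: rl_kernel_nonneg)
      also have "\<dots> \<le> rl_kernel \<beta> \<tau> t * (C * (1 + \<bar>\<tau>\<bar>) powr (-(\<alpha> + \<beta>)))"
        by (intro mult_left_mono bound rl_kernel_nonneg)
      also have "\<dots> \<le> norm (C * (rl_kernel \<beta> \<tau> t * (1 + \<bar>\<tau>\<bar>) powr (-(\<alpha> + \<beta>))))"
        by (simp add: mult_ac)
      finally show "norm (rl_kernel \<beta> \<tau> t *\<^sub>R f \<tau>)
          \<le> norm (C * (rl_kernel \<beta> \<tau> t * (1 + \<bar>\<tau>\<bar>) powr (-(\<alpha> + \<beta>))))" .
    qed
  qed measurable
  hence "(\<integral> \<tau>. (\<integral> t. rl_kernel \<beta> \<tau> t *\<^sub>R f \<tau> \<partial>\<nu>) \<partial>lborel)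
      = (\<integral> t. (\<integral> \<tau>. rl_kernel \<beta> \<tau> t *\<^sub>R f \<tau> \<partial>lborel) \<partial>\<nu>)"
    by (rule lborel_\<nu>.Fubini_integral[symmetric])
  moreover have "integral\<^sup>L (nu2 \<alpha> \<beta> \<nu>) f
      = (\<integral> \<tau>. (\<integral> t. rl_kernel \<beta> \<tau> t *\<^sub>R f \<tau> \<partial>\<nu>) / Beta \<alpha> \<beta> \<partial>lborel)"
    unfolding nu2_eq_density_real
    using Beta_real_pos[OF \<alpha> \<beta>]
    by (subst integral_density) (auto intro!: AE_I2 divide_nonneg_pos Bochner_Integration.integral_nonneg
        rl_kernel_nonneg \<nu>.borel_measurable_lebesgue_integral simp: scaleR_conv_of_real)
  ultimately show ?thesis by simp
qed


lemma Ctrans_nu2: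
  assumes support: "emeasure \<nu> {0<..} = 0" and z: "Im z > 0"
  shows "Ctrans (\<alpha> + \<beta>) (nu2 \<alpha> \<beta> \<nu>) z = exp (- \<i> * of_real (pi * \<beta>)) * Ctrans \<alpha> \<nu> z"
proof -
  define E where "E = exp (- \<i> * of_real (pi * \<beta>))"
  define C where "C t = E * of_real (Beta \<alpha> \<beta>) * (1 / (z + of_real t) powr of_real \<alpha>)" for t :: real
  have [measurable]: "C \<in> borel_measurable borel"
    unfolding C_def[abs_def] by measurable
  obtain K where "\<And>\<tau>. norm (1 / (z + of_real \<tau>) powr of_real (\<alpha> + \<beta>)) \<le> K * (1 + \<bar>\<tau>\<bar>) powr (-(\<alpha> + \<beta>))"
    using norm_inverse_powr_upper_half_plane_le[OF z, of "\<alpha> + \<beta>"] \<alpha> \<beta> by auto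
  hence "Ctrans (\<alpha> + \<beta>) (nu2 \<alpha> \<beta> \<nu>) z
      = (\<integral> t. (\<integral> \<tau>. rl_kernel \<beta> \<tau> t *\<^sub>R (1 / (z + of_real \<tau>) powr of_real (\<alpha> + \<beta>)) \<partial>lborel) \<partial>\<nu>) / Beta \<alpha> \<beta>"
    unfolding Ctrans_def by (intro integral_nu2) auto
  also have "\<dots> = (\<integral> t. (if t \<le> 0 then C t else 0) \<partial>\<nu>) / Beta \<alpha> \<beta>"
  proof -
    have "(\<integral> \<tau>. rl_kernel \<beta> \<tau> t *\<^sub>R (1 / (z + of_real \<tau>) powr of_real (\<alpha> + \<beta>)) \<partial>lborel)
        = (if t \<le> 0 then C t else 0)" for t
      using integral_rl_kernel_cauchy[OF \<alpha> \<beta> _ z, of t]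
      by (cases "t \<le> 0") (simp_all add: C_def E_def rl_kernel_def)
    thus ?thesis by simp
  qed
  also have "(\<integral> t. (if t \<le> 0 then C t else 0) \<partial>\<nu>) = (\<integral> t. C t \<partial>\<nu>)"
  proof (rule integral_cong_AE)
    have "AE t in \<nu>. t \<le> 0"
      using support by (intro AE_I'[of "{0<..}"]) auto
    thus "AE t in \<nu>. (if t \<le> 0 then C t else 0) = C t"
      by eventually_elim simp
  qed measurable
  also have "(\<integral> t. C t \<partial>\<nu>) = E * of_real (Beta \<alpha> \<beta>) * Ctrans \<alpha> \<nu> z"
    unfolding C_def Ctrans_def by (rule integral_mult_right_zero)
  finally show ?thesis
    using Beta_real_pos[OF \<alpha> \<beta>] by (simp add: E_def)
qed
end

theorem proposition7p14:
  fixes \<alpha> \<beta> :: real and \<nu>1 :: "real measure"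
  assumes "\<alpha> > 0" and "Mplus \<alpha> \<nu>1"
    and "emeasure \<nu>1 {0<..} = 0"
    and "\<beta> > 0"
  shows "Mplus (\<alpha> + \<beta>) (nu2 \<alpha> \<beta> \<nu>1) \<and>
    (\<forall>z. Im z > 0 \<longrightarrow>
       Ctrans \<alpha> \<nu>1 z = exp (\<i> * complex_of_real (pi * \<beta>)) * Ctrans (\<alpha> + \<beta>) (nu2 \<alpha> \<beta> \<nu>1) z)"
proof -
  have "Ctrans \<alpha> \<nu>1 z = exp (\<i> * of_real (pi * \<beta>)) * Ctrans (\<alpha> + \<beta>) (nu2 \<alpha> \<beta> \<nu>1) z"
    if "Im z > 0" for z
    using Ctrans_nu2[OF assms(1,4,2,3) that] by (simp add: exp_minus)
  with Mplus_nu2[OF assms(1,4,2)] show ?thesis by blast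
qed

end
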